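(* Let $A=kQ/I$ be a toupie algebra over a field $k$ of characteristic zero. The set $K=\{s\}\cup C'_1\cup C_3$ is a basis of $\operatorname{Im}D_0$, where $s=\sum_{\alpha^{(i)}}\alpha^i_0\|\alpha^i_0$ (sum over all branches of $Q$), $C'_1=\{\alpha^i_j\|\alpha^i_j-\alpha^i_0\|\alpha^i_0: j\ne0,\ \alpha^{(i)}\text{ a branch containing monomial relations}\}$ and $C_3=\{\alpha^i_j\|\alpha^i_j-\alpha^i_0\|\alpha^i_0: j\ne0,\ \alpha^{(i)}\text{ of length }>1\text{ containing no monomial relation}\}$.
   Context: A finite quiver $Q$ is a toupie quiver if it has a unique source $0$, a unique sink $\omega$, and every other vertex is the source of exactly one arrow and the target of exactly one arrow. Paths are composed left to right. A branch is a path from $0$ to $\omega$; the arrows of a branch $\alpha^{(i)}$ are $\alpha^i_0,\alpha^i_1,\dots$ in order, $\alpha^i_0$ starting at $0$. A toupie algebra is $A=kQ/I$ with $Q$ toupie and $I$ an admissible ideal generated by monomial relations (paths inside one branch) and non-monomial relations (linear combinations of branches). $E=kQ_0$, $e_x$ the trivial path at $x$. For an arrow $\gamma$ and $h\in e_{s(\gamma)}Ae_{t(\gamma)}$, $\gamma\|h$ is the $E$-bimodule map $kQ_1\to A$ sending $\gamma$ to $h$ and other arrows to $0$; $e_x\|e_x\in\mathrm{Hom}_{E^e}(E,A)$ sends $e_x$ to $e_x$ and other idempotents to $0$. $D_0:\mathrm{Hom}_{E^e}(E,A)\to\mathrm{Hom}_{E^e}(kQ_1,A)$ is the linear map with $D_0(e_x\|e_x)=\sum_{t(\gamma)=x}\gamma\|\gamma-\sum_{s(\gamma)=x}\gamma\|\gamma$.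 *)

theory Defs
  imports Main "HOL-Library.Function_Algebras"
begin

record ('v, 'a) quiver =
  verts :: "'v set"
  arrs  :: "'a set"
  src   :: "'a \<Rightarrow> 'v"
  tgt   :: "'a \<Rightarrow> 'v"

text \<open>A path is a start vertex together with its list of arrows (composed left
to right); the trivial path e_x is (x, []).\<close>
type_synonym ('v, 'a) path = "'v \<times> 'a list"

definition valid_path :: "('v, 'a, 'r) quiver_scheme \<Rightarrow> ('v, 'a) path \<Rightarrow> bool" where
  "valid_path Q p \<longleftrightarrow> fst p \<in> verts Q \<and> set (snd p) \<subseteq> arrs Q \<and>
     (snd p \<noteq> [] \<longrightarrow> src Q (hd (snd p)) = fst p) \<and>
     (\<forall>i. Suc i < length (snd p) \<longrightarrow> tgt Q (snd p ! i) = src Q (snd p ! Suc i))"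

definition pend :: "('v, 'a, 'r) quiver_scheme \<Rightarrow> ('v, 'a) path \<Rightarrow> 'v" where
  "pend Q p = (if snd p = [] then fst p else tgt Q (last (snd p)))"

definition toupie :: "('v, 'a, 'r) quiver_scheme \<Rightarrow> 'v \<Rightarrow> 'v \<Rightarrow> bool" where
  "toupie Q z w \<longleftrightarrow> finite (verts Q) \<and> finite (arrs Q) \<and>
     (\<forall>\<gamma>\<in>arrs Q. src Q \<gamma> \<in> verts Q \<and> tgt Q \<gamma> \<in> verts Q) \<and>
     z \<noteq> w \<and>
     {v \<in> verts Q. \<not> (\<exists>\<gamma>\<in>arrs Q. tgt Q \<gamma> = v)} = {z} \<and>
     {v \<in> verts Q. \<not> (\<exists>\<gamma>\<in>arrs Q. src Q \<gamma> = v)} = {w} \<and>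
     (\<forall>v \<in> verts Q - {z, w}. card {\<gamma> \<in> arrs Q. src Q \<gamma> = v} = 1 \<and>
                              card {\<gamma> \<in> arrs Q. tgt Q \<gamma> = v} = 1)"

definition branch :: "('v, 'a, 'r) quiver_scheme \<Rightarrow> 'v \<Rightarrow> 'v \<Rightarrow> ('v, 'a) path \<Rightarrow> bool" where
  "branch Q z w p \<longleftrightarrow> valid_path Q p \<and> fst p = z \<and> pend Q p = w \<and> snd p \<noteq> []"

definition subpath :: "('v, 'a, 'r) quiver_scheme \<Rightarrow> ('v, 'a) path \<Rightarrow> ('v, 'a) path \<Rightarrow> bool" where
  "subpath Q m b \<longleftrightarrow> valid_path Q m \<and> (\<exists>u v. snd b = u @ snd m @ v \<and> fst m = pend Q (fst b, u))"

definition pathalg :: "('v, 'a, 'r) quiver_scheme \<Rightarrow> (('v, 'a) path \<Rightarrow> 'k::field) set" where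
  "pathalg Q = {f. finite {p. f p \<noteq> 0} \<and> (\<forall>p. f p \<noteq> 0 \<longrightarrow> valid_path Q p)}"

definition pth :: "('v, 'a) path \<Rightarrow> ('v, 'a) path \<Rightarrow> 'k::field" where
  "pth p = (\<lambda>q. if q = p then 1 else 0)"

definition pmult :: "('v, 'a, 'r) quiver_scheme \<Rightarrow> (('v, 'a) path \<Rightarrow> 'k::field)
    \<Rightarrow> (('v, 'a) path \<Rightarrow> 'k) \<Rightarrow> ('v, 'a) path \<Rightarrow> 'k" where
  "pmult Q f g p = (\<Sum>i\<in>{0..length (snd p)}.
      f (fst p, take i (snd p)) * g (pend Q (fst p, take i (snd p)), drop i (snd p)))"

inductive_set gen_ideal :: "('v, 'a, 'r) quiver_scheme \<Rightarrow> (('v, 'a) path \<Rightarrow> 'k::field) set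
    \<Rightarrow> (('v, 'a) path \<Rightarrow> 'k) set"
  for Q G where
  gen: "g \<in> G \<Longrightarrow> g \<in> gen_ideal Q G"
| zero: "(\<lambda>_. 0) \<in> gen_ideal Q G"
| add: "x \<in> gen_ideal Q G \<Longrightarrow> y \<in> gen_ideal Q G \<Longrightarrow> (\<lambda>p. x p + y p) \<in> gen_ideal Q G"
| smult: "x \<in> gen_ideal Q G \<Longrightarrow> (\<lambda>p. c * x p) \<in> gen_ideal Q G"
| mult: "x \<in> gen_ideal Q G \<Longrightarrow> a \<in> pathalg Q \<Longrightarrow> b \<in> pathalg Q \<Longrightarrow>
         pmult Q (pmult Q a x) b \<in> gen_ideal Q G"

text \<open>Admissible: R^m \<subseteq> I \<subseteq> R^2 for some m \<ge> 2, R the arrow ideal.\<close>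
definition admissible :: "('v, 'a, 'r) quiver_scheme \<Rightarrow> (('v, 'a) path \<Rightarrow> 'k::field) set \<Rightarrow> bool" where
  "admissible Q I \<longleftrightarrow> I \<subseteq> pathalg Q \<and>
     (\<forall>f\<in>I. \<forall>p. length (snd p) < 2 \<longrightarrow> f p = 0) \<and>
     (\<exists>m\<ge>2. \<forall>p. valid_path Q p \<and> length (snd p) \<ge> m \<longrightarrow> pth p \<in> I)"

text \<open>Toupie algebra: Mon = monomial relations (paths inside a branch),
NM = non-monomial relations (linear combinations of branches); I is generated by both.\<close>
definition toupie_alg :: "('v, 'a, 'r) quiver_scheme \<Rightarrow> 'v \<Rightarrow> 'v \<Rightarrow> ('v, 'a) path set
    \<Rightarrow> (('v, 'a) path \<Rightarrow> 'k::field) set \<Rightarrow> bool" where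
  "toupie_alg Q z w Mon NM \<longleftrightarrow> toupie Q z w \<and>
     (\<forall>m\<in>Mon. \<exists>b. branch Q z w b \<and> subpath Q m b) \<and>
     (\<forall>r\<in>NM. r \<in> pathalg Q \<and> (\<forall>p. r p \<noteq> 0 \<longrightarrow> branch Q z w p)) \<and>
     admissible Q (gen_ideal Q (pth ` Mon \<union> NM))"

definition rel_ideal :: "('v, 'a, 'r) quiver_scheme \<Rightarrow> ('v, 'a) path set
    \<Rightarrow> (('v, 'a) path \<Rightarrow> 'k::field) set \<Rightarrow> (('v, 'a) path \<Rightarrow> 'k) set" where
  "rel_ideal Q Mon NM = gen_ideal Q (pth ` Mon \<union> NM)"

text \<open>An E-bimodule map kQ_1 \<rightarrow> A = kQ/I is determined by the images of the arrows;
we represent it by a function assigning to each arrow a representative in kQ.\<close>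
type_synonym ('v, 'a, 'k) hom1 = "'a \<Rightarrow> ('v, 'a) path \<Rightarrow> 'k"

definition bar :: "'a \<Rightarrow> (('v, 'a) path \<Rightarrow> 'k::field) \<Rightarrow> ('v, 'a, 'k) hom1" where
  "bar \<gamma> h = (\<lambda>\<delta>. if \<delta> = \<gamma> then h else (\<lambda>_. 0))"

definition arr_hom :: "('v, 'a, 'r) quiver_scheme \<Rightarrow> 'a \<Rightarrow> ('v, 'a, 'k::field) hom1" where
  "arr_hom Q \<gamma> = bar \<gamma> (pth (src Q \<gamma>, [\<gamma>]))"

definition hsmult :: "'k::field \<Rightarrow> ('v, 'a, 'k) hom1 \<Rightarrow> ('v, 'a, 'k) hom1" where
  "hsmult c \<phi> = (\<lambda>\<gamma> p. c * \<phi> \<gamma> p)"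

definition hom_eq :: "('v, 'a, 'r) quiver_scheme \<Rightarrow> (('v, 'a) path \<Rightarrow> 'k::field) set
    \<Rightarrow> ('v, 'a, 'k) hom1 \<Rightarrow> ('v, 'a, 'k) hom1 \<Rightarrow> bool" where
  "hom_eq Q I \<phi> \<psi> \<longleftrightarrow> (\<forall>\<gamma>\<in>arrs Q. (\<lambda>p. \<phi> \<gamma> p - \<psi> \<gamma> p) \<in> I)"

definition D0 :: "('v, 'a, 'r) quiver_scheme \<Rightarrow> 'v \<Rightarrow> ('v, 'a, 'k::field) hom1" where
  "D0 Q x = (\<Sum>\<gamma>\<in>{\<gamma>\<in>arrs Q. tgt Q \<gamma> = x}. arr_hom Q \<gamma>)
          - (\<Sum>\<gamma>\<in>{\<gamma>\<in>arrs Q. src Q \<gamma> = x}. arr_hom Q \<gamma>)"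

text \<open>Im D_0: D_0 is the linear map determined by its values on the basis e_x||e_x.\<close>
definition ImD0 :: "('v, 'a, 'r) quiver_scheme \<Rightarrow> (('v, 'a) path \<Rightarrow> 'k::field) set
    \<Rightarrow> ('v, 'a, 'k) hom1 set" where
  "ImD0 Q I = {\<phi>. \<exists>c. hom_eq Q I \<phi> (\<Sum>x\<in>verts Q. hsmult (c x) (D0 Q x))}"

definition hom_basis :: "('v, 'a, 'r) quiver_scheme \<Rightarrow> (('v, 'a) path \<Rightarrow> 'k::field) set
    \<Rightarrow> ('v, 'a, 'k) hom1 set \<Rightarrow> ('v, 'a, 'k) hom1 set \<Rightarrow> bool" where
  "hom_basis Q I K V \<longleftrightarrow> K \<subseteq> V \<and>
     (\<forall>\<phi>\<in>V. \<exists>F c. finite F \<and> F \<subseteq> K \<and> hom_eq Q I \<phi> (\<Sum>f\<in>F. hsmult (c f) f)) \<and>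
     (\<forall>F c. finite F \<longrightarrow> F \<subseteq> K \<longrightarrow> hom_eq Q I (\<Sum>f\<in>F. hsmult (c f) f) 0
            \<longrightarrow> (\<forall>f\<in>F. c f = 0))"

definition s_elem :: "('v, 'a, 'r) quiver_scheme \<Rightarrow> 'v \<Rightarrow> 'v \<Rightarrow> ('v, 'a, 'k::field) hom1" where
  "s_elem Q z w = (\<Sum>b\<in>{b. branch Q z w b}. arr_hom Q (snd b ! 0))"

definition C1' :: "('v, 'a, 'r) quiver_scheme \<Rightarrow> 'v \<Rightarrow> 'v \<Rightarrow> ('v, 'a) path set
    \<Rightarrow> ('v, 'a, 'k::field) hom1 set" where
  "C1' Q z w Mon = {arr_hom Q (snd b ! j) - arr_hom Q (snd b ! 0) | b j.
      branch Q z w b \<and> 0 < j \<and> j < length (snd b) \<and> (\<exists>m\<in>Mon. subpath Q m b)}"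

definition C3 :: "('v, 'a, 'r) quiver_scheme \<Rightarrow> 'v \<Rightarrow> 'v \<Rightarrow> ('v, 'a) path set
    \<Rightarrow> ('v, 'a, 'k::field) hom1 set" where
  "C3 Q z w Mon = {arr_hom Q (snd b ! j) - arr_hom Q (snd b ! 0) | b j.
      branch Q z w b \<and> 0 < j \<and> j < length (snd b) \<and> length (snd b) > 1 \<and>
      \<not> (\<exists>m\<in>Mon. subpath Q m b)}"

end

theory Submission
  imports Defs
begin

(*
  Every arrow lies on exactly one branch.  The arrows on no branch would carry arbitrarily
  long paths on which every element of I vanishes, since all relations live on branches;
  this contradicts admissibility.  The degree conditions at the inner vertices then make a
  branch determined by any one of its arrows.

  As I contains no path of length < 2, a map sending each arrow to a multiple of itself is
  determined modulo I by its coefficients, and Im D_0 consists of the maps whose coefficient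
  vector is a coboundary gamma |-> c(t gamma) - c(s gamma).  Along a branch such a coboundary
  telescopes to c(omega) - c(0), so it equals (c(omega) - c(0)) s plus the sum of
  g(eta) (eta||eta - eta_0||eta_0) over the arrows eta not starting at 0.  Reading off
  coefficients at these arrows and then at the first arrows of the branches gives linear
  independence.
*)

lemma sum_fun_apply: "(sum g F) x = (\<Sum>f\<in>F. g f x)"
  by (induction F rule: infinite_finite_induct) auto

lemma valid_path_iff:
  "valid_path Q (x, l) \<longleftrightarrow> x \<in> verts Q \<and> set l \<subseteq> arrs Q \<and>
     (l \<noteq> [] \<longrightarrow> src Q (hd l) = x) \<and> successively (\<lambda>a b. tgt Q a = src Q b) l"
  by (auto simp: valid_path_def successively_conv_nth hd_conv_nth)

lemma successively_take: "successively P l \<Longrightarrow> successively P (take n l)"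
  by (metis append_take_drop_id successively_append_iff)

lemma successively_drop: "successively P l \<Longrightarrow> successively P (drop n l)"
  by (metis append_take_drop_id successively_append_iff)

lemma long_chains_if_no_dead_end:
  assumes "B \<noteq> {}" and "\<forall>x\<in>B. \<exists>y\<in>B. S x y"
  shows "\<exists>l. length l = n \<and> set l \<subseteq> B \<and> successively S l"
proof (induction n)
  case 0
  show ?case by simp
next
  case (Suc n)
  then obtain l where l: "length l = n" "set l \<subseteq> B" "successively S l" by blast
  show ?case
  proof (cases "l = []")
    case True
    with assms(1) l show ?thesis by (intro exI[of _ "[SOME x. x \<in> B]"]) (auto intro: someI)
  next
    case False
    then have "last l \<in> B" using l(2) by auto
    then obtain y where "y \<in> B" "S (last l) y" using assms(2) by blast
    with l False show ?thesis
      by (intro exI[of _ "l @ [y]"]) (auto simp: successively_append_iff)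
  qed
qed

lemma sum_list_coboundary:
  assumes "successively (\<lambda>a b. tgt Q a = src Q b) l" and "l \<noteq> []"
  shows "(\<Sum>\<gamma>\<leftarrow>l. c (tgt Q \<gamma>) - c (src Q \<gamma>)) = (c (tgt Q (last l)) - c (src Q (hd l)) :: 'k::ab_group_add)"
  using assms
proof (induction l)
  case (Cons a l)
  then show ?case by (cases l) (auto simp: successively_Cons)
qed simp

locale toupie_algebra =
  fixes Q :: "('v, 'a) quiver" and z w :: 'v and Mon :: "('v, 'a) path set"
    and NM :: "(('v, 'a) path \<Rightarrow> 'k::field) set"
  assumes toupie_alg: "toupie_alg Q z w Mon NM"
begin

abbreviation composable :: "'a \<Rightarrow> 'a \<Rightarrow> bool" where
  "composable a b \<equiv> tgt Q a = src Q b"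

abbreviation I :: "(('v, 'a) path \<Rightarrow> 'k) set" where
  "I \<equiv> rel_ideal Q Mon NM"

lemma toupie: "toupie Q z w"
  using toupie_alg by (simp add: toupie_alg_def)

lemma finite_verts: "finite (verts Q)"
  and finite_arrs: "finite (arrs Q)"
  and src_in_verts: "\<gamma> \<in> arrs Q \<Longrightarrow> src Q \<gamma> \<in> verts Q"
  and tgt_in_verts: "\<gamma> \<in> arrs Q \<Longrightarrow> tgt Q \<gamma> \<in> verts Q"
  and source_ne_sink: "z \<noteq> w"
  and source_in_verts: "z \<in> verts Q"
  using toupie unfolding toupie_def by blast+

lemma tgt_ne_source: "\<gamma> \<in> arrs Q \<Longrightarrow> tgt Q \<gamma> \<noteq> z"
  using toupie unfolding toupie_def by blast

lemma src_ne_sink: "\<gamma> \<in> arrs Q \<Longrightarrow> src Q \<gamma> \<noteq> w"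
  using toupie unfolding toupie_def by blast

lemma ex_arr_into: "v \<in> verts Q \<Longrightarrow> v \<noteq> z \<Longrightarrow> \<exists>\<gamma>\<in>arrs Q. tgt Q \<gamma> = v"
  using toupie unfolding toupie_def by blast

lemma ex_arr_out_of: "v \<in> verts Q \<Longrightarrow> v \<noteq> w \<Longrightarrow> \<exists>\<gamma>\<in>arrs Q. src Q \<gamma> = v"
  using toupie unfolding toupie_def by blast

lemma arr_into_unique:
  assumes "v \<in> verts Q" "v \<noteq> z" "v \<noteq> w" "a \<in> arrs Q" "b \<in> arrs Q" "tgt Q a = v" "tgt Q b = v"
  shows "a = b"
proof -
  have "card {\<gamma> \<in> arrs Q. tgt Q \<gamma> = v} = 1" using toupie assms unfolding toupie_def by blast
  with assms show ?thesis by (metis (mono_tags, lifting) card_1_singletonE mem_Collect_eq singletonD)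
qed

lemma arr_out_of_unique:
  assumes "v \<in> verts Q" "v \<noteq> z" "v \<noteq> w" "a \<in> arrs Q" "b \<in> arrs Q" "src Q a = v" "src Q b = v"
  shows "a = b"
proof -
  have "card {\<gamma> \<in> arrs Q. src Q \<gamma> = v} = 1" using toupie assms unfolding toupie_def by blast
  with assms show ?thesis by (metis (mono_tags, lifting) card_1_singletonE mem_Collect_eq singletonD)
qed

definition is_walk :: "'a list \<Rightarrow> bool" where
  "is_walk l \<longleftrightarrow> set l \<subseteq> arrs Q \<and> successively composable l"

definition is_branch :: "'a list \<Rightarrow> bool" where
  "is_branch l \<longleftrightarrow> l \<noteq> [] \<and> is_walk l \<and> src Q (hd l) = z \<and> tgt Q (last l) = w"

lemma branch_iff: "branch Q z w b \<longleftrightarrow> fst b = z \<and> is_branch (snd b)"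
  using source_in_verts
  by (cases b) (auto simp: branch_def is_branch_def is_walk_def valid_path_iff pend_def)

lemma branch_nth_arr: "is_branch l \<Longrightarrow> j < length l \<Longrightarrow> l ! j \<in> arrs Q"
  unfolding is_branch_def is_walk_def by auto

lemma branch_nth_composable: "is_branch l \<Longrightarrow> Suc j < length l \<Longrightarrow> composable (l ! j) (l ! Suc j)"
  unfolding is_branch_def is_walk_def using successively_nth by blast

lemma branch_src_first: "is_branch l \<Longrightarrow> src Q (l ! 0) = z"
  unfolding is_branch_def by (auto simp: hd_conv_nth)

lemma branch_tgt_last: "is_branch l \<Longrightarrow> tgt Q (l ! (length l - 1)) = w"
  unfolding is_branch_def by (auto simp: last_conv_nth)

lemma branch_src_ne_source: "is_branch l \<Longrightarrow> 0 < j \<Longrightarrow> j < length l \<Longrightarrow> src Q (l ! j) \<noteq> z"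
  by (metis Suc_pred branch_nth_arr branch_nth_composable tgt_ne_source Suc_lessD)

definition branch_arrs :: "'a set" where
  "branch_arrs = {\<gamma>. \<exists>l. is_branch l \<and> \<gamma> \<in> set l}"

subsection \<open>Arrows off the branches\<close>

lemma rel_ideal_short: "f \<in> I \<Longrightarrow> length (snd p) < 2 \<Longrightarrow> f p = 0"
  using toupie_alg unfolding toupie_alg_def admissible_def rel_ideal_def by blast

lemma monomial_relation_arrs: "m \<in> Mon \<Longrightarrow> set (snd m) \<subseteq> branch_arrs"
proof -
  assume "m \<in> Mon"
  then obtain b where b: "branch Q z w b" "subpath Q m b" using toupie_alg unfolding toupie_alg_def by blast
  then obtain u v where "snd b = u @ snd m @ v" unfolding subpath_def by blast
  with b(1) show ?thesis unfolding branch_arrs_def branch_iff by auto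
qed

lemma nonmonomial_relation_arrs: "r \<in> NM \<Longrightarrow> r p \<noteq> 0 \<Longrightarrow> set (snd p) \<subseteq> branch_arrs"
  using toupie_alg unfolding toupie_alg_def branch_arrs_def branch_iff by blast

lemma rel_ideal_vanishes_off_branches:
  assumes "Bad \<inter> branch_arrs = {}" and "f \<in> I" and "snd p \<noteq> []" and "set (snd p) \<subseteq> Bad"
  shows "f p = 0"
proof -
  have "f \<in> gen_ideal Q (pth ` Mon \<union> NM)" using assms(2) by (simp add: rel_ideal_def)
  then show ?thesis using assms(3,4)
  proof (induction f arbitrary: p rule: gen_ideal.induct)
    case (gen g)
    from gen.hyps show ?case
    proof
      assume "g \<in> pth ` Mon"
      then obtain m where m: "m \<in> Mon" "g = pth m" by blast
      have "p \<noteq> m" using monomial_relation_arrs[OF m(1)] gen.prems assms(1) by (cases "snd p") auto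
      with m show ?thesis by (simp add: pth_def)
    next
      assume "g \<in> NM"
      with gen.prems assms(1) show ?thesis
        using nonmonomial_relation_arrs by (cases "snd p") fastforce+
    qed
  next
    case (mult x a b)
    have x: "x \<in> I" using mult.hyps(1) by (simp add: rel_ideal_def)
    have "pmult Q a x q = 0" if q: "set (snd q) \<subseteq> set (snd p)" for q
      unfolding pmult_def
    proof (rule sum.neutral, rule ballI)
      fix j
      have "x (pend Q (fst q, take j (snd q)), drop j (snd q)) = 0"
      proof (cases "drop j (snd q) = []")
        case True
        then show ?thesis using rel_ideal_short[OF x] by simp
      next
        case False
        have "set (drop j (snd q)) \<subseteq> set (snd p)"
          using q by (meson order_trans set_drop_subset)
        with False mult.prems show ?thesis by (intro mult.IH) auto
      qed
      then show "a (fst q, take j (snd q)) * x (pend Q (fst q, take j (snd q)), drop j (snd q)) = 0"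
        by simp
    qed
    then have "pmult Q a x (fst p, take i (snd p)) = 0" for i by (simp add: set_take_subset)
    then show ?case unfolding pmult_def[of Q "pmult Q a x"] by simp
  qed simp_all
qed

lemma walks_off_branches_bounded:
  assumes "Bad \<subseteq> arrs Q" and "Bad \<inter> branch_arrs = {}"
  shows "\<exists>n. \<forall>l. set l \<subseteq> Bad \<longrightarrow> successively composable l \<longrightarrow> length l < n"
proof -
  obtain m where m: "\<And>p. valid_path Q p \<Longrightarrow> length (snd p) \<ge> m \<Longrightarrow> pth p \<in> I"
    using toupie_alg unfolding toupie_alg_def admissible_def rel_ideal_def by blast
  have "length l < Suc m" if l: "set l \<subseteq> Bad" "successively composable l" for l
  proof (rule ccontr)
    assume "\<not> length l < Suc m"
    then have long: "length l \<ge> m" "l \<noteq> []" by auto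
    have "hd l \<in> arrs Q" using long l(1) assms(1) hd_in_set by blast
    then have "valid_path Q (src Q (hd l), l)" using l assms(1) src_in_verts by (auto simp: valid_path_iff)
    with long have "pth (src Q (hd l), l) \<in> I" using m by simp
    then have "pth (src Q (hd l), l) (src Q (hd l), l) = (0::'k)"
      by (rule rel_ideal_vanishes_off_branches[OF assms(2)]) (use l long in auto)
    then show False by (simp add: pth_def)
  qed
  then show ?thesis by blast
qed

definition reached_from_source :: "'a \<Rightarrow> bool" where
  "reached_from_source \<delta> \<longleftrightarrow> (\<exists>l. is_walk (l @ [\<delta>]) \<and> src Q (hd (l @ [\<delta>])) = z)"

definition reaches_sink :: "'a \<Rightarrow> bool" where
  "reaches_sink \<delta> \<longleftrightarrow> (\<exists>l. is_walk (\<delta> # l) \<and> tgt Q (last (\<delta> # l)) = w)"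

lemma branch_arr_reached_from_source: "\<delta> \<in> branch_arrs \<Longrightarrow> reached_from_source \<delta>"
proof -
  assume "\<delta> \<in> branch_arrs"
  then obtain l where "is_branch l" "\<delta> \<in> set l" unfolding branch_arrs_def by blast
  then obtain j where l: "is_branch l" "j < length l" "l ! j = \<delta>" by (meson in_set_conv_nth)
  then have "take j l @ [\<delta>] = take (Suc j) l" by (simp add: take_Suc_conv_app_nth)
  moreover have "is_walk (take (Suc j) l) \<and> src Q (hd (take (Suc j) l)) = z"
    using l by (auto simp: is_branch_def is_walk_def successively_take dest: in_set_takeD)
  ultimately show ?thesis unfolding reached_from_source_def by metis
qed

lemma branch_arr_reaches_sink: "\<delta> \<in> branch_arrs \<Longrightarrow> reaches_sink \<delta>"
proof -
  assume "\<delta> \<in> branch_arrs"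
  then obtain l where "is_branch l" "\<delta> \<in> set l" unfolding branch_arrs_def by blast
  then obtain j where l: "is_branch l" "j < length l" "l ! j = \<delta>" by (meson in_set_conv_nth)
  then have "\<delta> # drop (Suc j) l = drop j l" by (metis Cons_nth_drop_Suc)
  moreover have "is_walk (drop j l) \<and> tgt Q (last (drop j l)) = w"
    using l by (auto simp: is_branch_def is_walk_def successively_drop dest: in_set_dropD)
  ultimately show ?thesis unfolding reaches_sink_def by metis
qed

lemma arr_reached_from_source:
  assumes "\<delta> \<in> arrs Q" shows "reached_from_source \<delta>"
proof (rule ccontr)
  let ?B = "{\<delta> \<in> arrs Q. \<not> reached_from_source \<delta>}"
  assume "\<not> reached_from_source \<delta>"
  with assms have "?B \<noteq> {}" by blast
  have pred: "\<exists>\<epsilon>\<in>?B. composable \<epsilon> \<delta>" if \<delta>: "\<delta> \<in> ?B" for \<delta>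
  proof -
    have "src Q \<delta> \<noteq> z"
    proof
      assume "src Q \<delta> = z"
      then have "is_walk ([] @ [\<delta>]) \<and> src Q (hd ([] @ [\<delta>])) = z" using \<delta> by (simp add: is_walk_def)
      with \<delta> show False unfolding reached_from_source_def by blast
    qed
    then obtain \<epsilon> where \<epsilon>: "\<epsilon> \<in> arrs Q" "composable \<epsilon> \<delta>"
      using ex_arr_into src_in_verts \<delta> by force
    have "\<not> reached_from_source \<epsilon>"
    proof
      assume "reached_from_source \<epsilon>"
      then obtain l where "is_walk (l @ [\<epsilon>])" "src Q (hd (l @ [\<epsilon>])) = z"
        unfolding reached_from_source_def by blast
      then have "is_walk ((l @ [\<epsilon>]) @ [\<delta>]) \<and> src Q (hd ((l @ [\<epsilon>]) @ [\<delta>])) = z"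
        using \<epsilon> \<delta> by (auto simp: is_walk_def successively_append_iff hd_append)
      with \<delta> show False unfolding reached_from_source_def by blast
    qed
    with \<epsilon> show ?thesis by blast
  qed
  obtain n where n: "\<forall>l. set l \<subseteq> ?B \<longrightarrow> successively composable l \<longrightarrow> length l < n"
    using walks_off_branches_bounded[of ?B] branch_arr_reached_from_source by blast
  obtain l where l: "length l = n" "set l \<subseteq> ?B" "successively (\<lambda>a b. composable b a) l"
    using long_chains_if_no_dead_end[OF \<open>?B \<noteq> {}\<close>, of "\<lambda>a b. composable b a" n] pred by blast
  have "length (rev l) < n" using n[rule_format, of "rev l"] l by simp
  with l(1) show False by simp
qed

lemma arr_reaches_sink:
  assumes "\<delta> \<in> arrs Q" shows "reaches_sink \<delta>"
proof (rule ccontr)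
  let ?B = "{\<delta> \<in> arrs Q. \<not> reaches_sink \<delta>}"
  assume "\<not> reaches_sink \<delta>"
  with assms have "?B \<noteq> {}" by blast
  have succ: "\<exists>\<epsilon>\<in>?B. composable \<delta> \<epsilon>" if \<delta>: "\<delta> \<in> ?B" for \<delta>
  proof -
    have "tgt Q \<delta> \<noteq> w"
    proof
      assume "tgt Q \<delta> = w"
      then have "is_walk [\<delta>] \<and> tgt Q (last [\<delta>]) = w" using \<delta> by (simp add: is_walk_def)
      with \<delta> show False unfolding reaches_sink_def by blast
    qed
    then obtain \<epsilon> where \<epsilon>: "\<epsilon> \<in> arrs Q" "composable \<delta> \<epsilon>"
      using ex_arr_out_of tgt_in_verts \<delta> by force
    have "\<not> reaches_sink \<epsilon>"
    proof
      assume "reaches_sink \<epsilon>"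
      then obtain l where "is_walk (\<epsilon> # l)" "tgt Q (last (\<epsilon> # l)) = w"
        unfolding reaches_sink_def by blast
      then have "is_walk (\<delta> # \<epsilon> # l) \<and> tgt Q (last (\<delta> # \<epsilon> # l)) = w"
        using \<epsilon> \<delta> by (auto simp: is_walk_def)
      with \<delta> show False unfolding reaches_sink_def by blast
    qed
    with \<epsilon> show ?thesis by blast
  qed
  obtain n where n: "\<forall>l. set l \<subseteq> ?B \<longrightarrow> successively composable l \<longrightarrow> length l < n"
    using walks_off_branches_bounded[of ?B] branch_arr_reaches_sink by blast
  obtain l where "length l = n" "set l \<subseteq> ?B" "successively composable l"
    using long_chains_if_no_dead_end[OF \<open>?B \<noteq> {}\<close>, of composable n] succ by blast
  with n show False by blast
qed

lemma arr_on_branch: "\<gamma> \<in> arrs Q \<Longrightarrow> \<exists>l. is_branch l \<and> \<gamma> \<in> set l"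
proof -
  assume \<gamma>: "\<gamma> \<in> arrs Q"
  obtain l1 where l1: "is_walk (l1 @ [\<gamma>])" "src Q (hd (l1 @ [\<gamma>])) = z"
    using arr_reached_from_source[OF \<gamma>] unfolding reached_from_source_def by blast
  obtain l2 where l2: "is_walk (\<gamma> # l2)" "tgt Q (last (\<gamma> # l2)) = w"
    using arr_reaches_sink[OF \<gamma>] unfolding reaches_sink_def by blast
  have "l1 @ \<gamma> # l2 = (l1 @ [\<gamma>]) @ l2" by simp
  with l1 l2 have "is_branch (l1 @ \<gamma> # l2)" unfolding is_branch_def is_walk_def
    by (auto simp: successively_append_iff successively_Cons hd_append split: if_splits)
  then show ?thesis by auto
qed

subsection \<open>Uniqueness of branches\<close>

lemma branch_nth_eq_nth:
  assumes "is_branch l" "is_branch l'" "j < length l" "j' < length l'" "l ! j = l' ! j'"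
  shows "j = j' \<and> l ! 0 = l' ! 0"
  using assms(3-)
proof (induction j arbitrary: j')
  case 0
  then show ?case using branch_src_ne_source[OF assms(2), of j'] branch_src_first[OF assms(1)]
    by (cases j') auto
next
  case (Suc j)
  have nz: "src Q (l ! Suc j) \<noteq> z" using branch_src_ne_source[OF assms(1), of "Suc j"] Suc.prems(1) by simp
  then obtain i where i: "j' = Suc i"
    using branch_src_first[OF assms(2)] Suc.prems by (cases j') auto
  let ?v = "src Q (l ! Suc j)"
  have "l ! Suc j \<in> arrs Q" using branch_nth_arr[OF assms(1)] Suc.prems(1) .
  then have v: "?v \<in> verts Q" "?v \<noteq> w" using src_in_verts src_ne_sink by auto
  have "l ! j = l' ! i"
  proof (rule arr_into_unique[OF v(1) nz v(2)])
    show "tgt Q (l ! j) = ?v" using branch_nth_composable assms(1) Suc.prems by simp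
    show "tgt Q (l' ! i) = ?v" using branch_nth_composable[OF assms(2), of i] Suc.prems i by simp
  qed (use branch_nth_arr assms Suc.prems i in auto)
  with Suc.IH[of i] Suc.prems i show ?case by simp
qed

lemma branch_nth_eq_if_first_eq:
  assumes "is_branch l" "is_branch l'" "l ! 0 = l' ! 0"
  shows "i < length l \<Longrightarrow> i < length l' \<Longrightarrow> l ! i = l' ! i"
proof (induction i)
  case (Suc i)
  let ?v = "tgt Q (l ! i)"
  have a: "l ! i \<in> arrs Q" "l ! Suc i \<in> arrs Q" "l' ! Suc i \<in> arrs Q"
    using branch_nth_arr assms Suc.prems by auto
  have "l ! i = l' ! i" using Suc by simp
  then have s: "src Q (l ! Suc i) = ?v" "src Q (l' ! Suc i) = ?v"
    using branch_nth_composable[OF assms(1), of i] branch_nth_composable[OF assms(2), of i] Suc.prems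
    by simp_all
  have v: "?v \<in> verts Q" "?v \<noteq> z" "?v \<noteq> w" using tgt_in_verts tgt_ne_source src_ne_sink a s by metis+
  show ?case by (rule arr_out_of_unique[OF v _ _ s]) (use a in auto)
qed (use assms in simp)

lemma branch_eq_if_first_eq:
  assumes "is_branch l" "is_branch l'" "l ! 0 = l' ! 0"
  shows "l = l'"
proof -
  have "length l \<le> length l'" if "is_branch l" "is_branch l'" "l ! 0 = l' ! 0" for l l'
  proof (rule ccontr)
    assume long: "\<not> length l \<le> length l'"
    let ?n = "length l'"
    have n: "?n \<noteq> 0" using that(2) by (simp add: is_branch_def)
    have "l ! (?n - 1) = l' ! (?n - 1)" using branch_nth_eq_if_first_eq[OF that] long n by auto
    then have "tgt Q (l ! (?n - 1)) = w" using branch_tgt_last[OF that(2)] by simp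
    moreover have "tgt Q (l ! (?n - 1)) = src Q (l ! ?n)"
      using branch_nth_composable[OF that(1), of "?n - 1"] long n by simp
    moreover have "l ! ?n \<in> arrs Q" using branch_nth_arr that long by auto
    ultimately show False using src_ne_sink by metis
  qed
  with assms have "length l = length l'" by (metis le_antisym)
  with branch_nth_eq_if_first_eq[OF assms] show ?thesis by (simp add: nth_equalityI)
qed

lemma branch_eq_if_common_arr:
  "is_branch l \<Longrightarrow> is_branch l' \<Longrightarrow> \<gamma> \<in> set l \<Longrightarrow> \<gamma> \<in> set l' \<Longrightarrow> l = l'"
  by (metis branch_eq_if_first_eq branch_nth_eq_nth in_set_conv_nth)

lemma distinct_branch: "is_branch l \<Longrightarrow> distinct l"
  unfolding distinct_conv_nth using branch_nth_eq_nth by blast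

lemma finite_branches: "finite {b. branch Q z w b}"
proof -
  have "inj_on (\<lambda>b. snd b ! 0) {b. branch Q z w b}"
    by (rule inj_onI) (metis branch_iff branch_eq_if_first_eq prod.collapse mem_Collect_eq)
  moreover have "(\<lambda>b. snd b ! 0) ` {b. branch Q z w b} \<subseteq> arrs Q"
    using branch_nth_arr branch_iff is_branch_def by fastforce
  ultimately show ?thesis using finite_imageD finite_subset finite_arrs by blast
qed

definition branch_through :: "'a \<Rightarrow> 'a list" where
  "branch_through \<gamma> = (THE l. is_branch l \<and> \<gamma> \<in> set l)"

lemma branch_through_eq: "is_branch l \<Longrightarrow> \<gamma> \<in> set l \<Longrightarrow> branch_through \<gamma> = l"
  unfolding branch_through_def by (blast intro: the_equality branch_eq_if_common_arr)

lemma branch_through: "\<gamma> \<in> arrs Q \<Longrightarrow> is_branch (branch_through \<gamma>) \<and> \<gamma> \<in> set (branch_through \<gamma>)"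
  using arr_on_branch branch_through_eq by metis

definition first_arr :: "'a \<Rightarrow> 'a" where
  "first_arr \<gamma> = branch_through \<gamma> ! 0"

lemma first_arr_nth: "is_branch l \<Longrightarrow> j < length l \<Longrightarrow> first_arr (l ! j) = l ! 0"
  unfolding first_arr_def using branch_through_eq nth_mem by metis

lemma first_arr_initial: "\<gamma> \<in> arrs Q \<Longrightarrow> src Q (first_arr \<gamma>) = z"
  unfolding first_arr_def using branch_through branch_src_first by blast

lemma first_arr_of_initial: "\<gamma> \<in> arrs Q \<Longrightarrow> src Q \<gamma> = z \<Longrightarrow> first_arr \<gamma> = \<gamma>"
  by (metis branch_through branch_src_ne_source first_arr_nth in_set_conv_nth not_gr0)

subsection \<open>Coefficients of diagonal maps\<close>

definition diagonal :: "('v, 'a, 'k) hom1 \<Rightarrow> bool" where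
  "diagonal \<phi> \<longleftrightarrow> (\<forall>\<gamma> p. p \<noteq> (src Q \<gamma>, [\<gamma>]) \<longrightarrow> \<phi> \<gamma> p = 0)"

definition coeff :: "('v, 'a, 'k) hom1 \<Rightarrow> 'a \<Rightarrow> 'k" where
  "coeff \<phi> \<gamma> = \<phi> \<gamma> (src Q \<gamma>, [\<gamma>])"

lemma diagonal_arr_hom [simp]: "diagonal (arr_hom Q \<delta>)"
  and diagonal_add [simp]: "diagonal \<phi> \<Longrightarrow> diagonal \<psi> \<Longrightarrow> diagonal (\<phi> + \<psi>)"
  and diagonal_diff [simp]: "diagonal \<phi> \<Longrightarrow> diagonal \<psi> \<Longrightarrow> diagonal (\<phi> - \<psi>)"
  and diagonal_hsmult [simp]: "diagonal \<phi> \<Longrightarrow> diagonal (hsmult c \<phi>)"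
  by (simp_all add: diagonal_def arr_hom_def bar_def pth_def hsmult_def)

lemma diagonal_zero [simp]: "diagonal 0"
  and coeff_zero [simp]: "coeff 0 \<gamma> = 0"
  by (simp_all add: diagonal_def coeff_def)

lemma diagonal_sum [simp]: "(\<And>x. x \<in> F \<Longrightarrow> diagonal (g x)) \<Longrightarrow> diagonal (\<Sum>x\<in>F. g x)"
  unfolding diagonal_def sum_fun_apply by (auto intro!: sum.neutral)

lemma coeff_arr_hom [simp]: "coeff (arr_hom Q \<delta>) \<gamma> = (if \<gamma> = \<delta> then 1 else 0)"
  and coeff_add [simp]: "coeff (\<phi> + \<psi>) \<gamma> = coeff \<phi> \<gamma> + coeff \<psi> \<gamma>"
  and coeff_diff [simp]: "coeff (\<phi> - \<psi>) \<gamma> = coeff \<phi> \<gamma> - coeff \<psi> \<gamma>"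
  and coeff_hsmult [simp]: "coeff (hsmult c \<phi>) \<gamma> = c * coeff \<phi> \<gamma>"
  and coeff_sum [simp]: "coeff (\<Sum>x\<in>F. g x) \<gamma> = (\<Sum>x\<in>F. coeff (g x) \<gamma>)"
  by (simp_all add: coeff_def arr_hom_def bar_def pth_def hsmult_def sum_fun_apply)

lemma diagonal_eqI: "diagonal \<phi> \<Longrightarrow> diagonal \<psi> \<Longrightarrow> coeff \<phi> \<gamma> = coeff \<psi> \<gamma> \<Longrightarrow> \<phi> \<gamma> = \<psi> \<gamma>"
  unfolding diagonal_def coeff_def by (rule ext) (metis (no_types))

lemma hom_eq_iff_coeff:
  assumes "diagonal \<phi>" "diagonal \<psi>"
  shows "hom_eq Q I \<phi> \<psi> \<longleftrightarrow> (\<forall>\<gamma>\<in>arrs Q. coeff \<phi> \<gamma> = coeff \<psi> \<gamma>)"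
proof
  assume eq: "hom_eq Q I \<phi> \<psi>"
  show "\<forall>\<gamma>\<in>arrs Q. coeff \<phi> \<gamma> = coeff \<psi> \<gamma>"
  proof
    fix \<gamma> assume "\<gamma> \<in> arrs Q"
    with eq have "(\<lambda>p. \<phi> \<gamma> p - \<psi> \<gamma> p) \<in> I" unfolding hom_eq_def by blast
    from rel_ideal_short[OF this, of "(src Q \<gamma>, [\<gamma>])"] show "coeff \<phi> \<gamma> = coeff \<psi> \<gamma>"
      by (simp add: coeff_def)
  qed
next
  assume "\<forall>\<gamma>\<in>arrs Q. coeff \<phi> \<gamma> = coeff \<psi> \<gamma>"
  then have "\<phi> \<gamma> = \<psi> \<gamma>" if "\<gamma> \<in> arrs Q" for \<gamma>
    using diagonal_eqI[OF assms] that by blast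
  then show "hom_eq Q I \<phi> \<psi>" by (simp add: hom_eq_def rel_ideal_def gen_ideal.zero)
qed

lemma hom_eq_cong_arrs: "hom_eq Q J \<phi> \<psi> \<Longrightarrow> (\<And>\<gamma>. \<gamma> \<in> arrs Q \<Longrightarrow> \<psi> \<gamma> = \<chi> \<gamma>) \<Longrightarrow> hom_eq Q J \<phi> \<chi>"
  by (simp add: hom_eq_def)

definition D0_comb :: "('v \<Rightarrow> 'k) \<Rightarrow> ('v, 'a, 'k) hom1" where
  "D0_comb c = (\<Sum>x\<in>verts Q. hsmult (c x) (D0 Q x))"

lemma diagonal_D0_comb: "diagonal (D0_comb c)"
  by (simp add: D0_comb_def D0_def)

lemma coeff_D0_comb:
  assumes "\<gamma> \<in> arrs Q"
  shows "coeff (D0_comb c) \<gamma> = c (tgt Q \<gamma>) - c (src Q \<gamma>)"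
proof -
  have "coeff (D0 Q x) \<gamma> = (if tgt Q \<gamma> = x then 1 else 0) - (if src Q \<gamma> = x then 1 else 0)" for x
    using assms finite_arrs by (simp add: D0_def sum.If_cases)
  then have "coeff (D0_comb c) \<gamma> =
      (\<Sum>x\<in>verts Q. c x * ((if tgt Q \<gamma> = x then 1 else 0) - (if src Q \<gamma> = x then 1 else 0)))"
    by (simp add: D0_comb_def)
  also have "\<dots> =
      (\<Sum>x\<in>verts Q. if tgt Q \<gamma> = x then c x else 0) - (\<Sum>x\<in>verts Q. if src Q \<gamma> = x then c x else 0)"
    by (subst sum_subtractf[symmetric]) (rule sum.cong, auto)
  also have "\<dots> = c (tgt Q \<gamma>) - c (src Q \<gamma>)"
    using assms finite_verts src_in_verts tgt_in_verts by simp
  finally show ?thesis .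
qed

lemma in_ImD0_if_coboundary:
  assumes "diagonal \<phi>" and "\<forall>\<gamma>\<in>arrs Q. coeff \<phi> \<gamma> = c (tgt Q \<gamma>) - c (src Q \<gamma>)"
  shows "\<phi> \<in> ImD0 Q I"
proof -
  have "hom_eq Q I \<phi> (D0_comb c)"
    using assms coeff_D0_comb by (simp add: hom_eq_iff_coeff diagonal_D0_comb)
  then show ?thesis unfolding ImD0_def D0_comb_def by blast
qed

subsection \<open>The basis K\<close>

abbreviation s :: "('v, 'a, 'k) hom1" where
  "s \<equiv> s_elem Q z w"

definition noninitial_arrs :: "'a set" where
  "noninitial_arrs = {\<gamma> \<in> arrs Q. src Q \<gamma> \<noteq> z}"

definition arr_minus_first :: "'a \<Rightarrow> ('v, 'a, 'k) hom1" where
  "arr_minus_first \<eta> = arr_hom Q \<eta> - arr_hom Q (first_arr \<eta>)"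

abbreviation K :: "('v, 'a, 'k) hom1 set" where
  "K \<equiv> insert s (arr_minus_first ` noninitial_arrs)"

lemma finite_noninitial_arrs: "finite noninitial_arrs"
  unfolding noninitial_arrs_def using finite_arrs by simp

lemma diagonal_s [simp]: "diagonal s"
  by (simp add: s_elem_def)

lemma diagonal_arr_minus_first [simp]: "diagonal (arr_minus_first \<eta>)"
  by (simp add: arr_minus_first_def)

lemma coeff_s:
  assumes "\<gamma> \<in> arrs Q"
  shows "coeff s \<gamma> = (if src Q \<gamma> = z then 1 else 0)"
proof -
  have "{b. branch Q z w b} \<inter> {b. \<gamma> = snd b ! 0} =
      (if src Q \<gamma> = z then {(z, branch_through \<gamma>)} else {})"
  proof (intro equalityI subsetI)
    fix b assume "b \<in> {b. branch Q z w b} \<inter> {b. \<gamma> = snd b ! 0}"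
    then have b: "fst b = z" "is_branch (snd b)" "\<gamma> = snd b ! 0" by (auto simp: branch_iff)
    then have "\<gamma> \<in> set (snd b)" by (auto simp: is_branch_def)
    with b have "src Q \<gamma> = z" "snd b = branch_through \<gamma>"
      using branch_src_first branch_through_eq by auto
    with b(1) show "b \<in> (if src Q \<gamma> = z then {(z, branch_through \<gamma>)} else {})" by (cases b) auto
  next
    fix b assume "b \<in> (if src Q \<gamma> = z then {(z, branch_through \<gamma>)} else {})"
    then have "src Q \<gamma> = z" "b = (z, branch_through \<gamma>)" by (auto split: if_splits)
    with assms show "b \<in> {b. branch Q z w b} \<inter> {b. \<gamma> = snd b ! 0}"
      using branch_through first_arr_of_initial by (auto simp: branch_iff first_arr_def)
  qed
  then show ?thesis by (simp add: s_elem_def sum.If_cases finite_branches)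
qed

lemma coeff_arr_minus_first_noninitial:
  assumes "\<eta> \<in> noninitial_arrs" "\<gamma> \<in> noninitial_arrs"
  shows "coeff (arr_minus_first \<eta>) \<gamma> = (if \<gamma> = \<eta> then 1 else 0)"
  using assms first_arr_initial by (auto simp: arr_minus_first_def noninitial_arrs_def)

lemma inj_on_arr_minus_first: "inj_on arr_minus_first noninitial_arrs"
proof (rule inj_onI)
  fix \<eta> \<eta>' assume \<eta>: "\<eta> \<in> noninitial_arrs" "\<eta>' \<in> noninitial_arrs"
    and "arr_minus_first \<eta> = arr_minus_first \<eta>'"
  then have "coeff (arr_minus_first \<eta>) \<eta> = coeff (arr_minus_first \<eta>') \<eta>" by simp
  with \<eta> show "\<eta> = \<eta>'" by (simp add: coeff_arr_minus_first_noninitial split: if_splits)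
qed

lemma s_notin_arr_minus_first: "s \<notin> arr_minus_first ` noninitial_arrs"
proof
  assume "s \<in> arr_minus_first ` noninitial_arrs"
  then obtain \<eta> where \<eta>: "\<eta> \<in> noninitial_arrs" "s = arr_minus_first \<eta>" by blast
  moreover have "coeff s \<eta> = 0" using \<eta>(1) by (simp add: coeff_s noninitial_arrs_def)
  moreover have "coeff (arr_minus_first \<eta>) \<eta> = 1" by (simp add: coeff_arr_minus_first_noninitial \<eta>(1))
  ultimately show False by simp
qed

lemma C1'_Un_C3: "C1' Q z w Mon \<union> C3 Q z w Mon = arr_minus_first ` noninitial_arrs"
proof (intro equalityI subsetI)
  fix f :: "('v, 'a, 'k) hom1" assume "f \<in> C1' Q z w Mon \<union> C3 Q z w Mon"
  then obtain b j where bj: "f = arr_hom Q (snd b ! j) - arr_hom Q (snd b ! 0)" "branch Q z w b"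
    "0 < j" "j < length (snd b)" unfolding C1'_def C3_def by blast
  then have l: "is_branch (snd b)" by (simp add: branch_iff)
  with bj have "snd b ! j \<in> noninitial_arrs"
    using branch_nth_arr branch_src_ne_source unfolding noninitial_arrs_def by auto
  moreover have "f = arr_minus_first (snd b ! j)"
    using bj first_arr_nth[OF l] unfolding arr_minus_first_def by simp
  ultimately show "f \<in> arr_minus_first ` noninitial_arrs" by blast
next
  fix f assume "f \<in> arr_minus_first ` noninitial_arrs"
  then obtain \<eta> where \<eta>: "\<eta> \<in> noninitial_arrs" "f = arr_minus_first \<eta>" by blast
  then obtain l j where l: "is_branch l" "j < length l" "l ! j = \<eta>"
    using branch_through unfolding noninitial_arrs_def by (metis (mono_tags) in_set_conv_nth mem_Collect_eq)
  have j: "0 < j" using branch_src_first[OF l(1)] l \<eta> unfolding noninitial_arrs_def by (cases j) auto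
  have b: "branch Q z w (z, l)" using l branch_iff by simp
  have f: "f = arr_hom Q (snd (z, l) ! j) - arr_hom Q (snd (z, l) ! 0)"
    using \<eta> l first_arr_nth[OF l(1,2)] unfolding arr_minus_first_def by simp
  show "f \<in> C1' Q z w Mon \<union> C3 Q z w Mon"
  proof (cases "\<exists>m\<in>Mon. subpath Q m (z, l)")
    case True
    with b j l f have "f \<in> C1' Q z w Mon" unfolding C1'_def by auto
    then show ?thesis by blast
  next
    case False
    with b j l f have "f \<in> C3 Q z w Mon" unfolding C3_def
      by (intro CollectI exI[of _ "(z, l)"] exI[of _ j]) auto
    then show ?thesis by blast
  qed
qed

text \<open>Moving along a branch, each intermediate vertex is the target of one arrow and the
  source of the next one only, so adjusting the potential at that vertex shifts the
  coefficient 1 one arrow further.\<close>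

lemma branch_indicator_diff_coboundary:
  assumes "is_branch l"
  shows "j < length l \<Longrightarrow> \<exists>c. \<forall>\<gamma>\<in>arrs Q.
    (if \<gamma> = l ! j then 1 else 0) - (if \<gamma> = l ! 0 then 1 else 0) = (c (tgt Q \<gamma>) - c (src Q \<gamma>) :: 'k)"
proof (induction j)
  case 0
  show ?case by (intro exI[of _ "\<lambda>_. 0"]) simp
next
  case (Suc j)
  then obtain c where c: "\<forall>\<gamma>\<in>arrs Q.
      (if \<gamma> = l ! j then 1 else 0) - (if \<gamma> = l ! 0 then 1 else 0) = (c (tgt Q \<gamma>) - c (src Q \<gamma>) :: 'k)"
    by auto
  let ?v = "tgt Q (l ! j)"
  have a: "l ! j \<in> arrs Q" "l ! Suc j \<in> arrs Q" using branch_nth_arr assms Suc.prems by auto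
  have s: "src Q (l ! Suc j) = ?v" using branch_nth_composable assms Suc.prems by simp
  have v: "?v \<in> verts Q" "?v \<noteq> z" "?v \<noteq> w" using tgt_in_verts tgt_ne_source src_ne_sink a s by metis+
  have into: "tgt Q \<gamma> = ?v \<longleftrightarrow> \<gamma> = l ! j" if "\<gamma> \<in> arrs Q" for \<gamma>
    using arr_into_unique[OF v, of \<gamma> "l ! j"] a that by auto
  have out: "src Q \<gamma> = ?v \<longleftrightarrow> \<gamma> = l ! Suc j" if "\<gamma> \<in> arrs Q" for \<gamma>
    using arr_out_of_unique[OF v, of \<gamma> "l ! Suc j"] a s that by auto
  show ?case
  proof (intro exI[of _ "\<lambda>x. c x - (if x = ?v then 1 else 0)"] ballI)
    fix \<gamma> assume \<gamma>: "\<gamma> \<in> arrs Q"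
    show "(if \<gamma> = l ! Suc j then 1 else 0) - (if \<gamma> = l ! 0 then 1 else 0) =
      (c (tgt Q \<gamma>) - (if tgt Q \<gamma> = ?v then 1 else 0)) - (c (src Q \<gamma>) - (if src Q \<gamma> = ?v then 1 else (0::'k)))"
      using c[rule_format, OF \<gamma>] into[OF \<gamma>] out[OF \<gamma>] by (auto simp: algebra_simps split: if_splits)
  qed
qed

lemma K_subset_ImD0: "K \<subseteq> ImD0 Q I"
proof
  fix f assume "f \<in> K"
  then show "f \<in> ImD0 Q I"
  proof
    assume "f = s"
    then show ?thesis
      by (intro in_ImD0_if_coboundary[of _ "\<lambda>x. if x = z then -1 else 0"]) (auto simp: coeff_s tgt_ne_source)
  next
    assume "f \<in> arr_minus_first ` noninitial_arrs"
    then obtain \<eta> where \<eta>: "\<eta> \<in> noninitial_arrs" "f = arr_minus_first \<eta>" by blast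
    then obtain l j where l: "is_branch l" "j < length l" "l ! j = \<eta>"
      using branch_through unfolding noninitial_arrs_def by (metis (mono_tags) in_set_conv_nth mem_Collect_eq)
    then obtain c where c: "\<forall>\<gamma>\<in>arrs Q. coeff f \<gamma> = c (tgt Q \<gamma>) - c (src Q \<gamma>)"
      using branch_indicator_diff_coboundary[OF l(1,2)] \<eta>(2) first_arr_nth[OF l(1,2)]
      by (auto simp: arr_minus_first_def)
    with \<eta>(2) show ?thesis using in_ImD0_if_coboundary[of f c] by simp
  qed
qed

definition K_comb :: "'k \<Rightarrow> ('a \<Rightarrow> 'k) \<Rightarrow> ('v, 'a, 'k) hom1" where
  "K_comb a b = hsmult a s + (\<Sum>\<eta>\<in>noninitial_arrs. hsmult (b \<eta>) (arr_minus_first \<eta>))"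

lemma diagonal_K_comb [simp]: "diagonal (K_comb a b)"
  by (simp add: K_comb_def)

lemma K_comb_cong: "(\<And>\<eta>. \<eta> \<in> noninitial_arrs \<Longrightarrow> b \<eta> = b' \<eta>) \<Longrightarrow> K_comb a b = K_comb a b'"
  unfolding K_comb_def by (metis (no_types, lifting) sum.cong)

lemma sum_K: "(\<Sum>f\<in>K. hsmult (d f) f) = K_comb (d s) (\<lambda>\<eta>. d (arr_minus_first \<eta>))"
  using finite_noninitial_arrs s_notin_arr_minus_first inj_on_arr_minus_first
  by (simp add: K_comb_def sum.reindex)

lemma noninitial_fiber:
  assumes "\<gamma> \<in> arrs Q" "src Q \<gamma> = z"
  shows "{\<eta> \<in> noninitial_arrs. first_arr \<eta> = \<gamma>} = set (branch_through \<gamma>) - {\<gamma>}"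
proof (intro equalityI subsetI)
  fix \<eta> assume "\<eta> \<in> {\<eta> \<in> noninitial_arrs. first_arr \<eta> = \<gamma>}"
  then have \<eta>: "\<eta> \<in> arrs Q" "src Q \<eta> \<noteq> z" "first_arr \<eta> = \<gamma>" by (auto simp: noninitial_arrs_def)
  then have "\<gamma> \<in> set (branch_through \<eta>)"
    using branch_through unfolding first_arr_def is_branch_def by (metis nth_mem length_greater_0_conv)
  then have "branch_through \<gamma> = branch_through \<eta>"
    using branch_through[OF \<eta>(1)] branch_through_eq by blast
  with \<eta> assms show "\<eta> \<in> set (branch_through \<gamma>) - {\<gamma>}" using branch_through by auto
next
  let ?l = "branch_through \<gamma>"
  fix \<eta> assume \<eta>: "\<eta> \<in> set ?l - {\<gamma>}"
  then obtain i where i: "i < length ?l" "?l ! i = \<eta>" by (auto simp: in_set_conv_nth)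
  have first: "?l ! 0 = \<gamma>" using first_arr_of_initial[OF assms] by (simp add: first_arr_def)
  with \<eta> i have "0 < i" by (cases i) auto
  with i first show "\<eta> \<in> {\<eta> \<in> noninitial_arrs. first_arr \<eta> = \<gamma>}"
    using branch_through[OF assms(1)] branch_nth_arr branch_src_ne_source first_arr_nth
    by (auto simp: noninitial_arrs_def)
qed

lemma coeff_K_comb:
  assumes "\<gamma> \<in> arrs Q"
  shows "coeff (K_comb a b) \<gamma> =
    (if src Q \<gamma> = z then a - (\<Sum>\<eta>\<in>set (branch_through \<gamma>) - {\<gamma>}. b \<eta>) else b \<gamma>)"
proof (cases "src Q \<gamma> = z")
  case True
  have "coeff (arr_minus_first \<eta>) \<gamma> = - (if first_arr \<eta> = \<gamma> then 1 else 0)" if "\<eta> \<in> noninitial_arrs" for \<eta>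
    using that True by (auto simp: arr_minus_first_def noninitial_arrs_def)
  then have "(\<Sum>\<eta>\<in>noninitial_arrs. b \<eta> * coeff (arr_minus_first \<eta>) \<gamma>) =
      (\<Sum>\<eta>\<in>noninitial_arrs. - (if first_arr \<eta> = \<gamma> then b \<eta> else 0))"
    by (intro sum.cong) auto
  also have "\<dots> = - (\<Sum>\<eta>\<in>{\<eta> \<in> noninitial_arrs. first_arr \<eta> = \<gamma>}. b \<eta>)"
    using finite_noninitial_arrs by (simp add: sum_negf sum.inter_filter)
  finally show ?thesis
    using assms True by (simp add: K_comb_def coeff_s noninitial_fiber)
next
  case False
  then have "\<gamma> \<in> noninitial_arrs" using assms by (simp add: noninitial_arrs_def)
  then have "(\<Sum>\<eta>\<in>noninitial_arrs. b \<eta> * coeff (arr_minus_first \<eta>) \<gamma>) =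
      (\<Sum>\<eta>\<in>noninitial_arrs. if \<gamma> = \<eta> then b \<eta> else 0)"
    by (intro sum.cong) (simp_all add: coeff_arr_minus_first_noninitial)
  with \<open>\<gamma> \<in> noninitial_arrs\<close> show ?thesis
    using assms False finite_noninitial_arrs by (simp add: K_comb_def coeff_s)
qed

text \<open>The coboundary of a potential c telescopes to c w - c z along every branch.\<close>

lemma coeff_K_comb_coboundary:
  fixes c :: "'v \<Rightarrow> 'k"
  assumes "\<gamma> \<in> arrs Q"
  shows "coeff (K_comb (c w - c z) (\<lambda>\<eta>. c (tgt Q \<eta>) - c (src Q \<eta>))) \<gamma> = c (tgt Q \<gamma>) - c (src Q \<gamma>)"
proof (cases "src Q \<gamma> = z")
  case True
  let ?g = "\<lambda>\<eta>. c (tgt Q \<eta>) - c (src Q \<eta>)"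
  let ?l = "branch_through \<gamma>"
  have l: "is_branch ?l" "\<gamma> \<in> set ?l" using branch_through[OF assms] by auto
  have "(\<Sum>\<eta>\<in>set ?l. ?g \<eta>) = (\<Sum>\<eta>\<leftarrow>?l. ?g \<eta>)"
    using distinct_branch[OF l(1)] by (simp add: sum_list_distinct_conv_sum_set)
  also have "\<dots> = c w - c z"
  proof -
    have "successively composable ?l" "?l \<noteq> []" "src Q (hd ?l) = z" "tgt Q (last ?l) = w"
      using l(1) by (simp_all add: is_branch_def is_walk_def)
    from sum_list_coboundary[OF this(1,2)] this(3,4) show ?thesis by simp
  qed
  finally have "c w - c z = ?g \<gamma> + (\<Sum>\<eta>\<in>set ?l - {\<gamma>}. ?g \<eta>)"
    using l(2) by (simp add: sum.remove)
  then show ?thesis using assms True by (simp add: coeff_K_comb)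
qed (simp add: coeff_K_comb assms)

lemma ImD0_spanned_by_K:
  assumes "\<phi> \<in> ImD0 Q I"
  shows "\<exists>F d. finite F \<and> F \<subseteq> K \<and> hom_eq Q I \<phi> (\<Sum>f\<in>F. hsmult (d f) f)"
proof -
  obtain c where \<phi>: "hom_eq Q I \<phi> (D0_comb c)"
    using assms unfolding ImD0_def D0_comb_def by blast
  let ?g = "\<lambda>\<eta>. c (tgt Q \<eta>) - c (src Q \<eta>)"
  define d where "d f = (if f = s then c w - c z else ?g (the_inv_into noninitial_arrs arr_minus_first f))"
    for f
  have ds: "d s = c w - c z" by (simp add: d_def)
  have d_arr_minus_first: "d (arr_minus_first \<eta>) = ?g \<eta>" if "\<eta> \<in> noninitial_arrs" for \<eta>
  proof -
    have "arr_minus_first \<eta> \<noteq> s" using imageI[OF that] s_notin_arr_minus_first by metis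
    then show ?thesis by (simp add: d_def the_inv_into_f_f[OF inj_on_arr_minus_first that])
  qed
  have sum_K_eq: "(\<Sum>f\<in>K. hsmult (d f) f) = K_comb (c w - c z) ?g"
    unfolding sum_K ds by (rule K_comb_cong) (rule d_arr_minus_first)
  have "D0_comb c \<gamma> = K_comb (c w - c z) ?g \<gamma>" if "\<gamma> \<in> arrs Q" for \<gamma>
  proof (rule diagonal_eqI[OF diagonal_D0_comb diagonal_K_comb])
    show "coeff (D0_comb c) \<gamma> = coeff (K_comb (c w - c z) ?g) \<gamma>"
      using that by (simp add: coeff_D0_comb coeff_K_comb_coboundary)
  qed
  then have "hom_eq Q I \<phi> (\<Sum>f\<in>K. hsmult (d f) f)"
    unfolding sum_K_eq by (rule hom_eq_cong_arrs[OF \<phi>])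
  then show ?thesis using finite_noninitial_arrs by (intro exI[of _ K] exI[of _ d]) simp
qed

lemma K_comb_eq_zero:
  assumes "\<forall>\<gamma>\<in>arrs Q. coeff (K_comb a b) \<gamma> = 0"
  shows "a = 0" and "\<forall>\<eta>\<in>noninitial_arrs. b \<eta> = 0"
proof -
  show b: "\<forall>\<eta>\<in>noninitial_arrs. b \<eta> = 0"
    using assms by (auto simp: coeff_K_comb noninitial_arrs_def)
  obtain \<gamma> where \<gamma>: "\<gamma> \<in> arrs Q" "src Q \<gamma> = z"
    using ex_arr_out_of source_in_verts source_ne_sink by blast
  then have "set (branch_through \<gamma>) - {\<gamma>} \<subseteq> noninitial_arrs"
    using noninitial_fiber by blast
  with b have "(\<Sum>\<eta>\<in>set (branch_through \<gamma>) - {\<gamma>}. b \<eta>) = 0" by (auto intro: sum.neutral)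
  with assms[rule_format, OF \<gamma>(1)] \<gamma>(2) show "a = 0" by (simp add: coeff_K_comb[OF \<gamma>(1)])
qed

lemma K_linearly_independent:
  assumes "finite F" "F \<subseteq> K" "hom_eq Q I (\<Sum>f\<in>F. hsmult (d f) f) 0"
  shows "\<forall>f\<in>F. d f = 0"
proof -
  define d' where "d' f = (if f \<in> F then d f else 0)" for f
  have "(\<Sum>f\<in>F. hsmult (d f) f) = (\<Sum>f\<in>K. hsmult (d' f) f)"
    using assms(2) finite_noninitial_arrs
    by (intro sum.mono_neutral_cong_left) (auto simp: d'_def hsmult_def zero_fun_def)
  also have "\<dots> = K_comb (d' s) (\<lambda>\<eta>. d' (arr_minus_first \<eta>))"
    by (rule sum_K)
  finally have "\<forall>\<gamma>\<in>arrs Q. coeff (K_comb (d' s) (\<lambda>\<eta>. d' (arr_minus_first \<eta>))) \<gamma> = 0"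
    using assms(3) by (simp add: hom_eq_iff_coeff)
  then have "d' s = 0" "\<forall>\<eta>\<in>noninitial_arrs. d' (arr_minus_first \<eta>) = 0"
    by (rule K_comb_eq_zero)+
  show ?thesis
  proof
    fix f assume "f \<in> F"
    with assms(2) have "f = s \<or> (\<exists>\<eta>\<in>noninitial_arrs. f = arr_minus_first \<eta>)" by blast
    with \<open>f \<in> F\<close> \<open>d' s = 0\<close> \<open>\<forall>\<eta>\<in>noninitial_arrs. d' (arr_minus_first \<eta>) = 0\<close> show "d f = 0"
      by (auto simp: d'_def)
  qed
qed

end

theorem lemma3p4:
  fixes Q :: "('v, 'a) quiver" and z w :: 'v and Mon :: "('v, 'a) path set"
    and NM :: "(('v, 'a) path \<Rightarrow> 'k::field_char_0) set"
  assumes "toupie_alg Q z w Mon NM"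
  shows "hom_basis Q (rel_ideal Q Mon NM)
           ({s_elem Q z w} \<union> C1' Q z w Mon \<union> C3 Q z w Mon)
           (ImD0 Q (rel_ideal Q Mon NM))"
proof -
  interpret toupie_algebra Q z w Mon NM
    using assms by unfold_locales
  have K: "{s_elem Q z w} \<union> C1' Q z w Mon \<union> C3 Q z w Mon = K"
    using C1'_Un_C3 by auto
  show ?thesis
    unfolding hom_basis_def K using K_subset_ImD0 ImD0_spanned_by_K K_linearly_independent by blast
qed

end
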